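(* Let $\mathcal{M}\subset\mathbb{R}^d$ be a set of $n$ distinct points with the Euclidean metric, $k$ an integer with $2\le k<n$, and $0<\epsilon<\tfrac12$. Let $\epsilon_1=\frac{\epsilon}{3+2\epsilon}$, let $P_1$ be the output of the farthest-point-insertion procedure on $(\mathcal{M},k)$ (choose $q_1,q_2\in\mathcal{M}$ realizing $\operatorname{diam}(\mathcal{M})$, set $S_2=\{q_1,q_2\}$, and for $i=2,\dots,k-1$ add a point of $\mathcal{M}$ maximizing $\delta(\cdot,S_i)$), and let $\epsilon_2=\frac{\epsilon_1R_{P_1}}{2\sqrt d}$. Consider an axis-parallel grid in $\mathbb{R}^d$ of cubic cells of side length $\epsilon_2$. Then the number of grid cells that intersect $\mathcal{M}$ is $O\!\left(k\lceil 1/\epsilon_1\rceil^d\right)$, where the implied constant depends only on $d$.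
   Context: For a finite nonempty $S\subset\mathcal{M}$, $\delta(x,S)=\min_{s\in S}\|x-s\|$ and $R_S=\max_{x\in\mathcal{M}}\delta(x,S)$. *)

theory Defs
  imports "HOL-Analysis.Analysis"
begin

definition delta :: "'a::real_normed_vector \<Rightarrow> 'a set \<Rightarrow> real" where
  "delta x S = Min ((\<lambda>s. norm (x - s)) ` S)"

definition covrad :: "'a::real_normed_vector set \<Rightarrow> 'a set \<Rightarrow> real" where
  "covrad M S = Max ((\<lambda>x. delta x S) ` M)"

text \<open>P is a possible output of farthest-point insertion on (M,k): q1,q2 realize the
  diameter of M, and for i = 2..k-1 the point q(i+1) maximizes delta(.,S_i), S_i = {q1..qi}.\<close>
definition fpi_output :: "'a::real_normed_vector set \<Rightarrow> nat \<Rightarrow> 'a set \<Rightarrow> bool" where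
  "fpi_output M k P \<longleftrightarrow> (\<exists>q::nat \<Rightarrow> 'a.
      (\<forall>i\<in>{1..k}. q i \<in> M) \<and>
      (\<forall>x\<in>M. \<forall>y\<in>M. norm (x - y) \<le> norm (q 1 - q 2)) \<and>
      (\<forall>i\<in>{2..<k}. \<forall>y\<in>M. delta y (q ` {1..i}) \<le> delta (q (Suc i)) (q ` {1..i})) \<and>
      P = q ` {1..k})"

text \<open>Index of the half-open grid cell (side h, offset o) containing x.\<close>
definition cell_index :: "real^'n \<Rightarrow> real \<Rightarrow> real^'n \<Rightarrow> int^'n" where
  "cell_index c h x = (\<chi> i. \<lfloor>(x $ i - c $ i) / h\<rfloor>)"

end

theory Submission
  imports Defs
begin

text \<open>Every point of \<open>M\<close> lies within \<open>R = covrad M P\<close> of some point of the \<open>k\<close>-element set \<open>P\<close>,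
  so the cells meeting \<open>M\<close> are among the cells meeting \<open>k\<close> balls of radius \<open>R\<close>. A ball of radius
  \<open>R\<close> meets at most \<open>2R/h + 2\<close> cells of side \<open>h\<close> in each coordinate direction, and for
  \<open>h = \<epsilon>\<^sub>1 R / (2 \<surd>d)\<close> this is \<open>4 \<surd>d / \<epsilon>\<^sub>1 + 2 \<le> (4 \<surd>d + 2) \<lceil>1/\<epsilon>\<^sub>1\<rceil>\<close>.\<close>

lemma vec_box_eq_image_PiE:
  "{z::'a^'n. \<forall>i. z $ i \<in> S i} = vec_lambda ` PiE UNIV S"
proof (intro equalityI subsetI)
  fix z :: "'a^'n"
  assume "z \<in> {z. \<forall>i. z $ i \<in> S i}"
  then have "vec_nth z \<in> PiE UNIV S" by auto
  then show "z \<in> vec_lambda ` PiE UNIV S" by (metis image_eqI vector_component_simps(3) vec_lambda_eta)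
qed auto

lemma card_vec_box:
  "card {z::'a^'n. \<forall>i. z $ i \<in> S i} = (\<Prod>i\<in>UNIV. card (S i))"
proof -
  have "inj_on vec_lambda (PiE UNIV S :: ('n \<Rightarrow> 'a) set)"
    by (auto intro: inj_onI simp: vec_lambda_inject)
  then show ?thesis by (simp add: vec_box_eq_image_PiE card_image card_PiE)
qed

lemma finite_vec_box:
  "(\<And>i. finite (S i)) \<Longrightarrow> finite {z::'a^'n. \<forall>i. z $ i \<in> S i}"
  by (simp add: vec_box_eq_image_PiE finite_PiE)

lemma card_floor_interval_le:
  fixes a b :: real
  assumes "a \<le> b"
  shows "real (card {\<lfloor>a\<rfloor>..\<lfloor>b\<rfloor>}) \<le> b - a + 2"
proof -
  have "\<lfloor>a\<rfloor> \<le> \<lfloor>b\<rfloor>" using assms by (rule floor_mono)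
  then have "real (card {\<lfloor>a\<rfloor>..\<lfloor>b\<rfloor>}) = real_of_int (\<lfloor>b\<rfloor> - \<lfloor>a\<rfloor> + 1)" by simp
  also have "\<dots> \<le> b - a + 2"
    using of_int_floor_le[of b] real_of_int_floor_gt_diff_one[of a] by linarith
  finally show ?thesis .
qed

lemma cell_index_zero_side: "cell_index c 0 x = 0"
  by (simp add: cell_index_def vec_eq_iff)

lemma cell_index_cball_subset:
  assumes "0 < h"
  shows "cell_index c h ` cball p r
    \<subseteq> {z. \<forall>i. z $ i \<in> {\<lfloor>(p $ i - r - c $ i) / h\<rfloor>..\<lfloor>(p $ i + r - c $ i) / h\<rfloor>}}"
proof clarify
  fix x i
  assume "x \<in> cball p r"
  then have "\<bar>(p - x) $ i\<bar> \<le> r"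
    using component_le_norm_cart[of "p - x" i] by (simp add: dist_norm)
  then have "(p $ i - r - c $ i) / h \<le> (x $ i - c $ i) / h"
    "(x $ i - c $ i) / h \<le> (p $ i + r - c $ i) / h"
    using assms by (auto intro: divide_right_mono)
  then show "cell_index c h x $ i \<in> {\<lfloor>(p $ i - r - c $ i) / h\<rfloor>..\<lfloor>(p $ i + r - c $ i) / h\<rfloor>}"
    by (auto simp: cell_index_def intro: floor_mono)
qed

lemma finite_cell_index_cball:
  "0 < h \<Longrightarrow> finite (cell_index c h ` cball p r)"
  by (rule finite_subset[OF cell_index_cball_subset finite_vec_box]) auto

lemma card_cell_index_cball_le:
  fixes p :: "real^'n"
  assumes "0 < h" "0 \<le> r"
  shows "real (card (cell_index c h ` cball p r)) \<le> (2 * r / h + 2) ^ CARD('n)"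
proof -
  let ?S = "\<lambda>i. {\<lfloor>(p $ i - r - c $ i) / h\<rfloor>..\<lfloor>(p $ i + r - c $ i) / h\<rfloor>}"
  have width: "(p $ i + r - c $ i) / h - (p $ i - r - c $ i) / h = 2 * r / h" for i
    using assms(1) by (simp add: field_simps)
  have card_S: "real (card (?S i)) \<le> 2 * r / h + 2" for i
    using card_floor_interval_le[of "(p $ i - r - c $ i) / h" "(p $ i + r - c $ i) / h"]
      assms width by (simp add: divide_right_mono)
  have "card (cell_index c h ` cball p r) \<le> card {z::int^'n. \<forall>i. z $ i \<in> ?S i}"
    using assms(1) by (intro card_mono finite_vec_box cell_index_cball_subset) auto
  also have "\<dots> = (\<Prod>i\<in>UNIV. card (?S i))" by (rule card_vec_box)
  finally have "real (card (cell_index c h ` cball p r)) \<le> real (\<Prod>i\<in>UNIV. card (?S i))"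
    by (rule of_nat_mono)
  also have "\<dots> = (\<Prod>i\<in>UNIV. real (card (?S i)))" by (rule of_nat_prod)
  also have "\<dots> \<le> (\<Prod>i\<in>(UNIV::'n set). 2 * r / h + 2)"
    by (intro prod_mono) (use card_S in auto)
  finally show ?thesis by simp
qed

lemma card_cell_index_covered_le:
  fixes P :: "(real^'n) set"
  assumes "finite P" "A \<subseteq> (\<Union>p\<in>P. cball p r)" "0 < h" "0 \<le> r"
  shows "real (card (cell_index c h ` A)) \<le> real (card P) * (2 * r / h + 2) ^ CARD('n)"
proof -
  have "cell_index c h ` A \<subseteq> (\<Union>p\<in>P. cell_index c h ` cball p r)"
    using assms(2) by blast
  then have "card (cell_index c h ` A) \<le> card (\<Union>p\<in>P. cell_index c h ` cball p r)"
    using assms by (intro card_mono finite_UN_I finite_cell_index_cball) auto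
  also have "\<dots> \<le> (\<Sum>p\<in>P. card (cell_index c h ` cball p r))"
    using assms(1) by (rule card_UN_le)
  finally have "real (card (cell_index c h ` A))
      \<le> (\<Sum>p\<in>P. real (card (cell_index c h ` cball p r)))"
    by (metis of_nat_le_iff of_nat_sum)
  also have "\<dots> \<le> (\<Sum>p\<in>P. (2 * r / h + 2) ^ CARD('n))"
    using assms(3,4) by (intro sum_mono card_cell_index_cball_le)
  finally show ?thesis by simp
qed

lemma delta_attained:
  "finite S \<Longrightarrow> S \<noteq> {} \<Longrightarrow> \<exists>s\<in>S. delta x S = norm (x - s)"
  unfolding delta_def by (metis (no_types, lifting) Min_in finite_imageI image_iff image_is_empty)

lemma subset_UN_cball_covrad:
  assumes "finite M" "finite S" "S \<noteq> {}"
  shows "M \<subseteq> (\<Union>s\<in>S. cball s (covrad M S))"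
proof
  fix x
  assume "x \<in> M"
  then have "delta x S \<le> covrad M S"
    using assms(1) unfolding covrad_def by (intro Max_ge) auto
  moreover obtain s where "s \<in> S" "delta x S = norm (x - s)"
    using delta_attained assms(2,3) by blast
  ultimately show "x \<in> (\<Union>s\<in>S. cball s (covrad M S))"
    by (auto simp: dist_norm norm_minus_commute)
qed

lemma covrad_nonneg:
  assumes "finite M" "M \<noteq> {}" "finite S" "S \<noteq> {}"
  shows "0 \<le> covrad M S"
proof -
  obtain x where "x \<in> M" using assms(2) by blast
  then obtain s where "dist s x \<le> covrad M S"
    using subset_UN_cball_covrad[OF assms(1,3,4)] by auto
  then show ?thesis by (meson zero_le_dist order_trans)
qed

lemma fpi_output_finite_nonempty_card_le:
  assumes "fpi_output M k P" "1 \<le> k"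
  shows "finite P" "P \<noteq> {}" "card P \<le> k"
proof -
  obtain q where "P = q ` {1..k}"
    using assms(1) unfolding fpi_output_def by blast
  then show "finite P" "P \<noteq> {}" "card P \<le> k"
    using assms(2) card_image_le[of "{1..k}" q] by auto
qed

lemma card_cell_index_covrad_le:
  fixes M P :: "(real^'n) set"
  assumes "finite M" "M \<noteq> {}" "finite P" "P \<noteq> {}" "0 < e"
  shows "real (card (cell_index c (e * covrad M P / (2 * sqrt (real CARD('n)))) ` M))
    \<le> real (card P) * ((4 * sqrt (real CARD('n)) + 2) * real_of_int \<lceil>1 / e\<rceil>) ^ CARD('n)"
    (is "real (card (cell_index c ?h ` M)) \<le> _ * (?K * ?N) ^ _")
proof -
  define R where "R = covrad M P"
  define h where "h = e * R / (2 * sqrt (real CARD('n)))"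
  have "?h = h" by (simp add: R_def h_def)
  have "0 \<le> R" unfolding R_def using assms by (intro covrad_nonneg)
  have "1 / e \<le> ?N" by simp
  have "0 < \<lceil>1 / e\<rceil>" using assms(5) by simp
  then have "1 \<le> ?N" by simp
  have "1 \<le> ?K" by simp
  consider "R = 0" | "0 < R" using \<open>0 \<le> R\<close> by linarith
  then have "real (card (cell_index c h ` M)) \<le> real (card P) * (?K * ?N) ^ CARD('n)"
  proof cases
    case 1
    have "1 * 1 \<le> ?K * ?N" using \<open>1 \<le> ?K\<close> \<open>1 \<le> ?N\<close> by (intro mult_mono) auto
    then have "1 \<le> (?K * ?N) ^ CARD('n)" by (intro one_le_power) simp
    have "card (cell_index c h ` M) \<le> card {0 :: int^'n}"
      using 1 by (intro card_mono) (auto simp: h_def cell_index_zero_side)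
    then have "real (card (cell_index c h ` M)) \<le> 1" by simp
    also have "\<dots> \<le> real (card P)" using assms(3,4) by (simp add: Suc_le_eq card_gt_0_iff)
    also have "\<dots> \<le> real (card P) * (?K * ?N) ^ CARD('n)"
      using \<open>1 \<le> (?K * ?N) ^ CARD('n)\<close> by (simp add: mult_le_cancel_left1)
    finally show ?thesis .
  next
    case 2
    have "0 < h" using 2 assms(5) by (simp add: h_def)
    have "2 * R / h = 4 * sqrt (real CARD('n)) * (1 / e)"
      using 2 assms(5) by (simp add: h_def field_simps)
    also have "\<dots> \<le> 4 * sqrt (real CARD('n)) * ?N"
      using \<open>1 / e \<le> ?N\<close> by (intro mult_left_mono) auto
    moreover have "?K * ?N = 4 * sqrt (real CARD('n)) * ?N + 2 * ?N"
      by (simp add: distrib_right)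
    ultimately have "2 * R / h + 2 \<le> ?K * ?N"
      using \<open>1 \<le> ?N\<close> by linarith
    then have "(2 * R / h + 2) ^ CARD('n) \<le> (?K * ?N) ^ CARD('n)"
      using \<open>0 < h\<close> \<open>0 \<le> R\<close> by (intro power_mono) auto
    have "real (card (cell_index c h ` M)) \<le> real (card P) * (2 * R / h + 2) ^ CARD('n)"
      using assms \<open>0 < h\<close> \<open>0 \<le> R\<close> unfolding R_def
      by (intro card_cell_index_covered_le subset_UN_cball_covrad) auto
    also have "\<dots> \<le> real (card P) * (?K * ?N) ^ CARD('n)"
      using \<open>(2 * R / h + 2) ^ CARD('n) \<le> _\<close> by (intro mult_left_mono) auto
    finally show ?thesis .
  qed
  then show ?thesis unfolding \<open>?h = h\<close> .
qed

theorem lemma6: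
  "\<exists>C::real. \<forall>(M::(real^'n) set) (k::nat) (\<epsilon>::real) (P1::(real^'n) set) (c::real^'n).
     finite M \<and> 2 \<le> k \<and> k < card M \<and> 0 < \<epsilon> \<and> \<epsilon> < 1/2 \<and> fpi_output M k P1 \<longrightarrow>
     (let \<epsilon>1 = \<epsilon> / (3 + 2 * \<epsilon>);
          \<epsilon>2 = \<epsilon>1 * covrad M P1 / (2 * sqrt (real CARD('n)))
      in real (card (cell_index c \<epsilon>2 ` M))
           \<le> C * real k * real_of_int (\<lceil>1 / \<epsilon>1\<rceil>) ^ CARD('n))"
proof (intro exI allI impI)
  let ?K = "4 * sqrt (real CARD('n)) + 2"
  fix M :: "(real^'n) set" and k :: nat and \<epsilon> :: real and P1 c
  assume H: "finite M \<and> 2 \<le> k \<and> k < card M \<and> 0 < \<epsilon> \<and> \<epsilon> < 1/2 \<and> fpi_output M k P1"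
  define e where "e = \<epsilon> / (3 + 2 * \<epsilon>)"
  have "0 < e" using H by (simp add: e_def)
  have "M \<noteq> {}" using H by auto
  have P1: "finite P1" "P1 \<noteq> {}" "card P1 \<le> k"
    using H fpi_output_finite_nonempty_card_le[of M k P1] by auto
  have "real (card (cell_index c (e * covrad M P1 / (2 * sqrt (real CARD('n)))) ` M))
      \<le> real (card P1) * (?K * real_of_int \<lceil>1 / e\<rceil>) ^ CARD('n)"
    using H \<open>M \<noteq> {}\<close> P1 \<open>0 < e\<close> by (intro card_cell_index_covrad_le) auto
  also have "\<dots> \<le> real k * (?K * real_of_int \<lceil>1 / e\<rceil>) ^ CARD('n)"
    using P1(3) \<open>0 < e\<close>
    by (intro mult_right_mono zero_le_power mult_nonneg_nonneg) (auto intro: less_trans[of _ 0])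
  also have "\<dots> = ?K ^ CARD('n) * real k * real_of_int \<lceil>1 / e\<rceil> ^ CARD('n)"
    by (simp add: power_mult_distrib)
  finally show "let \<epsilon>1 = \<epsilon> / (3 + 2 * \<epsilon>);
          \<epsilon>2 = \<epsilon>1 * covrad M P1 / (2 * sqrt (real CARD('n)))
      in real (card (cell_index c \<epsilon>2 ` M))
           \<le> ?K ^ CARD('n) * real k * real_of_int (\<lceil>1 / \<epsilon>1\<rceil>) ^ CARD('n)"
    unfolding Let_def e_def .
qed

end
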